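(* Let $S=\{x_1,\dots,x_N\}\subset\mathbb{R}^n$ be a two-distance tight frame for $\mathbb{R}^n$ whose two inner products $a\neq b$ satisfy $a\neq -b$ (i.e. $S$ is not equiangular). Let $\Gamma_1$ be the graph on $\{1,\dots,N\}$ in which $i\neq j$ are adjacent iff $\langle x_i,x_j\rangle=a$. Then $\Gamma_1$ is a strongly regular graph, and exactly one of the following holds: (i) $\sum_i x_i=0$; then $S$ is a spherical $2$-design in $\mathbb{R}^n$, and (if $\Gamma_1$ is neither complete nor empty) the Gram matrix of $S$ coincides with the Gram matrix of $S_1(\Gamma_1)$, of $S_2(\Gamma_1)$, or of a regular simplex of $N$ points in $\mathbb{R}^{N-1}$ (all inner products $-1/(N-1)$); (ii) $s=\sum_i x_i\neq 0$; then $\|s\|^2=N^2/n$, and the vectors $y_i=(x_i-s/N)/\sqrt{1-1/n}$ are unit vectors in the hyperplane $s^\perp\cong\mathbb{R}^{n-1}$ forming a two-distance spherical $2$-design there (a "shifted $2$-design"), which is then of the type described in (i) (with $n-1$ in place of $n$). Conversely, for every strongly regular graph $\Gamma_1$ on $N$ vertices that is neither complete nor empty, each of the three $2$-designs $S_1(\Gamma_1)$, $S_2(\Gamma_1)$, and the regular simplex of $N$ points in $\mathbb{R}^{N-1}$ is a two-distance tight frame for its $m$-dimensional span, and for each such design $T=\{y_1,\dots,y_N\}\subset\mathbb{R}^m$ the set $\{\sqrt{1-1/(m+1)}\,y_i+u\}_{i=1}^N\subset\mathbb{R}^{m+1}$, where $u$ is orthogonal to $\mathbb{R}^m$ with $\|u\|=1/\sqrt{m+1}$,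 is again a two-distance tight frame for $\mathbb{R}^{m+1}$; thus every such graph yields six two-distance tight frames.
   Context: A finite set of unit vectors $S\subset\mathbb{R}^n$ is a spherical two-distance set if there are two real numbers $a,b$ such that the inner product of any two distinct vectors of $S$ is $a$ or $b$. A finite set $\{x_1,\dots,x_N\}$ of unit vectors is a (unit-norm) tight frame for $\mathbb{R}^n$ if there is $A>0$ with $\sum_{i=1}^N\langle x,x_i\rangle^2=A\|x\|^2$ for all $x\in\mathbb{R}^n$ (then $A=N/n$). A two-distance tight frame is a unit-norm tight frame that is a spherical two-distance set. A set of unit vectors $\{x_1,\dots,x_N\}\subset\mathbb{R}^n$ is a spherical $2$-design if $\sum_i x_i=0$ and $\sum_{i,j}\langle x_i,x_j\rangle^2=N^2/n$ (equivalently, $\sum_i x_i=0$ and it is a unit-norm tight frame for $\mathbb{R}^n$). A strongly regular graph $\mathrm{SRG}(v,k,\lambda,\mu)$ is a $k$-regular graph on $v$ vertices in which any two adjacent vertices have $\lambda$ common neighbours and any two nonadjacent vertices have $\mu$ common neighbours. For a strongly regular graph $\Gamma_1$ on $N$ vertices, neither complete nor empty, with adjacency matrix $\Phi_1$, the space $\mathbf{1}^\perp\subset\mathbb{R}^N$ ($\mathbf{1}$ the all-ones vector) decomposes as an orthogonal sum of two eigenspaces $E_1,E_2$ of $\Phi_1$ (eigenvalues $r_1> r_2$). $S_j(\Gamma_1)$ ($j=1,2$) denotes the set obtained by orthogonally projecting the standard basis vectors $e_1,\dots,e_N$ of $\mathbb{R}^N$ onto $E_j$ and normalizing each projection to unit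 length (the Delsarte–Goethals–Seidel spherical embedding); it is a spherical two-distance set in $E_j$ whose vertex $i$ corresponds to $e_i$. *)

theory Defs
  imports "HOL-Analysis.Analysis"
begin

text \<open>Families of vectors indexed by a finite type 'i (N = CARD('i)).
  A subspace V of a Euclidean space plays the role of R^m, m = dim V.\<close>

definition unit_in :: "'a::euclidean_space set \<Rightarrow> ('i \<Rightarrow> 'a) \<Rightarrow> bool" where
  "unit_in V x \<longleftrightarrow> (\<forall>i. norm (x i) = 1 \<and> x i \<in> V)"

definition tight_frame_on :: "'a::euclidean_space set \<Rightarrow> ('i::finite \<Rightarrow> 'a) \<Rightarrow> bool" where
  "tight_frame_on V x \<longleftrightarrow> unit_in V x \<and>
     (\<exists>A>0. \<forall>v\<in>V. (\<Sum>i\<in>UNIV. (v \<bullet> x i)^2) = A * (norm v)^2)"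

definition two_distance :: "('i \<Rightarrow> 'a::euclidean_space) \<Rightarrow> bool" where
  "two_distance x \<longleftrightarrow> (\<forall>i. norm (x i) = 1) \<and>
     (\<exists>a b. \<forall>i j. i \<noteq> j \<longrightarrow> x i \<bullet> x j = a \<or> x i \<bullet> x j = b)"

definition two_distance_tight_frame_on :: "'a::euclidean_space set \<Rightarrow> ('i::finite \<Rightarrow> 'a) \<Rightarrow> bool" where
  "two_distance_tight_frame_on V x \<longleftrightarrow> tight_frame_on V x \<and> two_distance x"

definition spherical_2design_on :: "'a::euclidean_space set \<Rightarrow> ('i::finite \<Rightarrow> 'a) \<Rightarrow> bool" where
  "spherical_2design_on V x \<longleftrightarrow> unit_in V x \<and> (\<Sum>i\<in>UNIV. x i) = 0 \<and>
     (\<Sum>i\<in>UNIV. \<Sum>j\<in>UNIV. (x i \<bullet> x j)^2) = (real CARD('i))^2 / real (dim V)"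

definition srg :: "('v::finite \<Rightarrow> 'v \<Rightarrow> bool) \<Rightarrow> bool" where
  "srg adj \<longleftrightarrow> (\<forall>u w. adj u w \<longleftrightarrow> adj w u) \<and> (\<forall>u. \<not> adj u u) \<and>
     (\<exists>k l m. (\<forall>u. card {w. adj u w} = k) \<and>
       (\<forall>u w. u \<noteq> w \<and> adj u w \<longrightarrow> card {z. adj u z \<and> adj w z} = l) \<and>
       (\<forall>u w. u \<noteq> w \<and> \<not> adj u w \<longrightarrow> card {z. adj u z \<and> adj w z} = m))"

definition complete_graph :: "('v \<Rightarrow> 'v \<Rightarrow> bool) \<Rightarrow> bool" where
  "complete_graph adj \<longleftrightarrow> (\<forall>u w. u \<noteq> w \<longrightarrow> adj u w)"

definition empty_graph :: "('v \<Rightarrow> 'v \<Rightarrow> bool) \<Rightarrow> bool" where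
  "empty_graph adj \<longleftrightarrow> (\<forall>u w. \<not> adj u w)"

definition adj_matrix :: "('v::finite \<Rightarrow> 'v \<Rightarrow> bool) \<Rightarrow> real^'v^'v" where
  "adj_matrix adj = (\<chi> i j. if adj i j then 1 else 0)"

definition eigs_perp :: "('v::finite \<Rightarrow> 'v \<Rightarrow> bool) \<Rightarrow> real set" where
  "eigs_perp adj = {r. \<exists>v::real^'v. v \<noteq> 0 \<and> v \<bullet> vec 1 = 0 \<and> adj_matrix adj *v v = r *\<^sub>R v}"

definition srg_eigval :: "('v::finite \<Rightarrow> 'v \<Rightarrow> bool) \<Rightarrow> nat \<Rightarrow> real" where
  "srg_eigval adj j = (if j = 1 then Max (eigs_perp adj) else Min (eigs_perp adj))"

definition srg_eigspace :: "('v::finite \<Rightarrow> 'v \<Rightarrow> bool) \<Rightarrow> nat \<Rightarrow> (real^'v) set" where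
  "srg_eigspace adj j = {v. v \<bullet> vec 1 = 0 \<and> adj_matrix adj *v v = srg_eigval adj j *\<^sub>R v}"

text \<open>S_j(Gamma): normalized orthogonal projections of the standard basis vectors onto E_j
  (the Delsarte-Goethals-Seidel spherical embedding); vertex i corresponds to e_i.\<close>
definition dgs_embedding :: "('v::finite \<Rightarrow> 'v \<Rightarrow> bool) \<Rightarrow> nat \<Rightarrow> 'v \<Rightarrow> real^'v" where
  "dgs_embedding adj j i =
     (let p = closest_point (srg_eigspace adj j) (axis i 1) in p /\<^sub>R norm p)"

definition same_gram :: "('i \<Rightarrow> 'a::real_inner) \<Rightarrow> ('i \<Rightarrow> 'b::real_inner) \<Rightarrow> bool" where
  "same_gram x y \<longleftrightarrow> (\<forall>i j. x i \<bullet> x j = y i \<bullet> y j)"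

definition simplex_gram :: "('i::finite \<Rightarrow> 'a::real_inner) \<Rightarrow> bool" where
  "simplex_gram x \<longleftrightarrow> (\<forall>i j. x i \<bullet> x j = (if i = j then 1 else - 1 / (real CARD('i) - 1)))"

definition design_type :: "'a::euclidean_space set \<Rightarrow> ('v::finite \<Rightarrow> 'a) \<Rightarrow> ('v \<Rightarrow> 'v \<Rightarrow> bool) \<Rightarrow> bool" where
  "design_type V x adj \<longleftrightarrow> spherical_2design_on V x \<and>
     (\<not> complete_graph adj \<and> \<not> empty_graph adj \<longrightarrow>
        same_gram x (dgs_embedding adj 1) \<or> same_gram x (dgs_embedding adj 2) \<or> simplex_gram x)"

definition lifting_property :: "('i::finite \<Rightarrow> 'a::euclidean_space) \<Rightarrow> bool" where
  "lifting_property T \<longleftrightarrow>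
     (let V = span (range T); m = dim V in
      \<forall>u. (\<forall>w\<in>V. u \<bullet> w = 0) \<and> norm u = 1 / sqrt (real m + 1) \<longrightarrow>
        two_distance_tight_frame_on (span (insert u V))
          (\<lambda>i. sqrt (1 - 1 / (real m + 1)) *\<^sub>R T i + u))"

end

theory Submission
  imports Defs
begin

(* The proof works with Gram matrices.  A unit-norm family x is a tight frame for a
   subspace V with bound C iff its Gram matrix G satisfies G^2 = C G (on span x), and
   then C * dim V = N; with zero sum it is a spherical 2-design.  If G has two
   off-diagonal values a, b, write G = b J + (a - b) A + (1 - b) I with A the adjacency
   matrix of the graph of value a.  Comparing entries of G^2 = C G shows, when a is not
   +-b, that degrees and common-neighbour counts are constant: the graph is strongly
   regular.  For a strongly regular graph the orthogonal projections onto the two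
   eigenspaces of A in 1-perp are explicit polynomials in A, J, I; hence the
   Delsarte-Goethals-Seidel embeddings have explicit Gram matrices, and a zero-sum
   two-distance tight frame, whose Gram matrix is forced to be a scalar multiple of such
   a projection, has one of them as Gram matrix.  If the sum s of the frame is nonzero,
   all row sums of G equal C = N/n, and subtracting s/N and rescaling gives a zero-sum
   two-distance tight frame of the hyperplane orthogonal to s.  Finally, lifting a
   zero-sum tight frame by an orthogonal vector of norm 1/sqrt(m+1) preserves tightness. *)

lemma parseval_orthonormal:
  fixes B :: "'a::euclidean_space set"
  assumes fin: "finite B" and po: "pairwise orthogonal B" and nb: "\<And>b. b \<in> B \<Longrightarrow> norm b = 1"
    and x: "x \<in> span B"
  shows "(norm x)^2 = (\<Sum>b\<in>B. (x \<bullet> b)^2)"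
proof -
  define y where "y = x - (\<Sum>b\<in>B. (x \<bullet> b) *\<^sub>R b)"
  have ysp: "y \<in> span B" unfolding y_def
    by (intro span_diff x span_sum span_scale span_base)
  have bb: "b \<bullet> b = 1" if "b \<in> B" for b
    using nb[OF that] by (simp add: norm_eq_1)
  have orth: "c \<bullet> b = 0" if "c \<in> B" "b \<in> B" "c \<noteq> b" for b c
    using po that unfolding pairwise_def orthogonal_def by blast
  have yb: "y \<bullet> b = 0" if b: "b \<in> B" for b
  proof -
    have "(\<Sum>c\<in>B. (x \<bullet> c) *\<^sub>R c) \<bullet> b = (\<Sum>c\<in>B. (x \<bullet> c) * (c \<bullet> b))"
      by (simp add: inner_sum_left)
    also have "\<dots> = (\<Sum>c\<in>B. if c = b then x \<bullet> b else 0)"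
      by (rule sum.cong) (auto simp: bb orth b)
    also have "\<dots> = x \<bullet> b" using fin b by simp
    finally show ?thesis by (simp add: y_def inner_diff_left)
  qed
  have "orthogonal y y"
    by (rule orthogonal_to_span[OF ysp]) (simp add: orthogonal_def yb)
  hence "x = (\<Sum>b\<in>B. (x \<bullet> b) *\<^sub>R b)" by (simp add: orthogonal_def y_def)
  hence "x \<bullet> x = (\<Sum>b\<in>B. (x \<bullet> b)^2)"
    by (metis (no_types, lifting) inner_sum_right inner_scaleR_right power2_eq_square sum.cong)
  thus ?thesis by (simp add: power2_norm_eq_inner)
qed

text \<open>Trace identity: the bound of a unit-norm tight frame of N vectors for V is N / dim V.
  Summing the frame identity over an orthonormal basis of V counts each norm once.\<close>
lemma tight_frame_bound_dim:
  fixes x :: "'i::finite \<Rightarrow> 'a::euclidean_space"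
  assumes V: "subspace V" and u: "unit_in V x"
    and fr: "\<forall>v\<in>V. (\<Sum>i\<in>UNIV. (v \<bullet> x i)^2) = C * (norm v)^2"
  shows "C * real (dim V) = real CARD('i)"
proof -
  obtain B where B: "B \<subseteq> V" "pairwise orthogonal B" "\<And>x. x \<in> B \<Longrightarrow> norm x = 1"
    "independent B" "card B = dim V" "span B = V"
    using orthonormal_basis_subspace[OF V] by metis
  have fin: "finite B" using B(4) independent_imp_finite by blast
  have "C * real (dim V) = (\<Sum>b\<in>B. C * (norm b)^2)" using B by simp
  also have "\<dots> = (\<Sum>b\<in>B. \<Sum>i\<in>UNIV. (b \<bullet> x i)^2)"
    using fr B(1) by (intro sum.cong) auto
  also have "\<dots> = (\<Sum>i\<in>UNIV. \<Sum>b\<in>B. (x i \<bullet> b)^2)"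
    by (subst sum.swap) (simp add: inner_commute)
  also have "\<dots> = (\<Sum>i\<in>UNIV. (norm (x i))^2)"
    using parseval_orthonormal[OF fin B(2) B(3)] u B(6) unfolding unit_in_def by (metis (no_types))
  also have "\<dots> = real CARD('i)" using u unfolding unit_in_def by simp
  finally show ?thesis .
qed

text \<open>Polarisation of the frame identity: the frame operator is C times the identity on V.\<close>
lemma tight_frame_bilinear:
  fixes x :: "'i::finite \<Rightarrow> 'a::euclidean_space"
  assumes V: "subspace V"
    and fr: "\<forall>v\<in>V. (\<Sum>i\<in>UNIV. (v \<bullet> x i)^2) = C * (norm v)^2"
    and v: "v \<in> V" and w: "w \<in> V"
  shows "(\<Sum>i\<in>UNIV. (v \<bullet> x i) * (w \<bullet> x i)) = C * (v \<bullet> w)"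
proof -
  have p: "v + w \<in> V" "v - w \<in> V" using V v w by (auto intro: subspace_add subspace_diff)
  have "4 * (\<Sum>i\<in>UNIV. (v \<bullet> x i) * (w \<bullet> x i)) =
     (\<Sum>i\<in>UNIV. ((v + w) \<bullet> x i)^2) - (\<Sum>i\<in>UNIV. ((v - w) \<bullet> x i)^2)"
    by (simp add: sum_distrib_left sum_subtractf[symmetric] inner_add_left inner_diff_left
        power2_eq_square algebra_simps)
  also have "\<dots> = C * ((norm (v + w))^2 - (norm (v - w))^2)"
    using fr p by (simp only: right_diff_distrib)
  also have "\<dots> = 4 * (C * (v \<bullet> w))"
    by (simp add: power2_norm_eq_inner inner_add_left inner_add_right inner_diff_left
        inner_diff_right inner_commute algebra_simps)
  finally show ?thesis by simp
qed

lemma tight_frame_gram_square: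
  fixes x :: "'i::finite \<Rightarrow> 'a::euclidean_space"
  assumes V: "subspace V" and xV: "\<forall>i. x i \<in> V"
    and fr: "\<forall>v\<in>V. (\<Sum>i\<in>UNIV. (v \<bullet> x i)^2) = C * (norm v)^2"
  shows "(\<Sum>k\<in>UNIV. (x i \<bullet> x k) * (x k \<bullet> x j)) = C * (x i \<bullet> x j)"
  using tight_frame_bilinear[OF V fr, of "x i" "x j"] xV by (simp add: inner_commute)

lemma gram_square_imp_frame:
  fixes T :: "'i::finite \<Rightarrow> 'a::euclidean_space"
  assumes g: "\<forall>i j. (\<Sum>k\<in>UNIV. (T i \<bullet> T k) * (T k \<bullet> T j)) = c * (T i \<bullet> T j)"
  shows "\<forall>v\<in>span (range T). (\<Sum>k\<in>UNIV. (v \<bullet> T k)^2) = c * (norm v)^2"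
proof
  fix v assume "v \<in> span (range T)"
  then obtain u where v: "v = (\<Sum>w\<in>range T. u w *\<^sub>R w)"
    using span_finite[of "range T"] by auto
  have gw: "(\<Sum>k\<in>UNIV. (w \<bullet> T k) * (w' \<bullet> T k)) = c * (w \<bullet> w')"
    if "w \<in> range T" "w' \<in> range T" for w w'
    using that g by (auto simp: inner_commute)
  have vt: "v \<bullet> T k = (\<Sum>w\<in>range T. u w * (w \<bullet> T k))" for k
    by (simp add: v inner_sum_left)
  have "(\<Sum>k\<in>UNIV. (v \<bullet> T k)^2) =
      (\<Sum>k\<in>UNIV. \<Sum>w\<in>range T. \<Sum>w'\<in>range T. u w * u w' * ((w \<bullet> T k) * (w' \<bullet> T k)))"
    by (simp add: vt power2_eq_square sum_product algebra_simps)
  also have "\<dots> = (\<Sum>w\<in>range T. \<Sum>w'\<in>range T. u w * u w' * (\<Sum>k\<in>UNIV. (w \<bullet> T k) * (w' \<bullet> T k)))"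
    by (simp add: sum_distrib_left sum.swap[of _ UNIV])
  also have "\<dots> = (\<Sum>w\<in>range T. \<Sum>w'\<in>range T. u w * u w' * (c * (w \<bullet> w')))"
    by (intro sum.cong refl) (simp add: gw)
  also have "\<dots> = c * (v \<bullet> v)"
    by (simp add: v inner_sum_left inner_sum_right sum_distrib_left algebra_simps)
      (subst sum.swap, simp add: inner_commute mult.left_commute)
  also have "\<dots> = c * (norm v)^2" by (simp add: power2_norm_eq_inner)
  finally show "(\<Sum>k\<in>UNIV. (v \<bullet> T k)^2) = c * (norm v)^2" .
qed

text \<open>A unit-norm tight frame with zero sum is a spherical 2-design: the frame potential is
  the sum over i of C * norm (x i)^2 = C * N = N^2 / dim V.\<close>
lemma zero_sum_tight_frame_design:
  fixes x :: "'i::finite \<Rightarrow> 'a::euclidean_space"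
  assumes V: "subspace V" and tf: "tight_frame_on V x" and s: "(\<Sum>i\<in>UNIV. x i) = 0"
  shows "spherical_2design_on V x"
proof -
  obtain C where C: "\<forall>v\<in>V. (\<Sum>i\<in>UNIV. (v \<bullet> x i)^2) = C * (norm v)^2"
    using tf unfolding tight_frame_on_def by blast
  have u: "unit_in V x" using tf unfolding tight_frame_on_def by blast
  have d: "C * real (dim V) = real CARD('i)" by (rule tight_frame_bound_dim[OF V u C])
  hence dp: "real (dim V) \<noteq> 0" by (metis mult_zero_right of_nat_0_less_iff zero_less_card_finite less_irrefl)
  have "(\<Sum>i\<in>UNIV. \<Sum>j\<in>UNIV. (x i \<bullet> x j)^2) = (\<Sum>i\<in>UNIV. C * (norm (x i))^2)"
    using C u unfolding unit_in_def by (intro sum.cong) (auto simp: inner_commute)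
  also have "\<dots> = C * real CARD('i)" using u unfolding unit_in_def by simp
  also have "\<dots> = (real CARD('i))^2 / real (dim V)"
    using d dp by (simp add: eq_divide_eq power2_eq_square)
  finally show ?thesis using u s unfolding spherical_2design_on_def by simp
qed

text \<open>Writing w = v + k u, the cross terms vanish because T sums to 0.\<close>
lemma lifted_tight_frame:
  fixes T :: "'i::finite \<Rightarrow> 'a::euclidean_space"
  assumes V: "subspace V" and TV: "\<And>i. T i \<in> V"
    and fr: "\<forall>v\<in>V. (\<Sum>i\<in>UNIV. (v \<bullet> T i)^2) = C * (norm v)^2"
    and s: "(\<Sum>i\<in>UNIV. T i) = 0" and uV: "\<forall>v\<in>V. u \<bullet> v = 0"
    and bound: "\<sigma>^2 * C = real CARD('i) * (u \<bullet> u)"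
    and w: "w \<in> span (insert u V)"
  shows "(\<Sum>i\<in>UNIV. (w \<bullet> (\<sigma> *\<^sub>R T i + u))^2) = real CARD('i) * (u \<bullet> u) * (norm w)^2"
proof -
  obtain k where "w - k *\<^sub>R u \<in> span V" using w unfolding span_insert by auto
  then obtain v where vV: "v \<in> V" and wv: "w = v + k *\<^sub>R u"
    using span_eq_iff[of V] V by (metis add.commute diff_add_cancel)
  have uv: "u \<bullet> v = 0" "v \<bullet> u = 0" using uV vV by (auto simp: inner_commute)
  have uT: "u \<bullet> T i = 0" "T i \<bullet> u = 0" for i using uV TV by (auto simp: inner_commute)
  have wz: "w \<bullet> (\<sigma> *\<^sub>R T i + u) = \<sigma> * (v \<bullet> T i) + k * (u \<bullet> u)" for i
    by (simp add: wv inner_add_left inner_add_right uv uT)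
  have sv: "(\<Sum>i\<in>UNIV. v \<bullet> T i) = 0" using s by (simp add: inner_sum_right[symmetric])
  have "(\<Sum>i\<in>UNIV. (w \<bullet> (\<sigma> *\<^sub>R T i + u))^2) = \<sigma>^2 * (\<Sum>i\<in>UNIV. (v \<bullet> T i)^2)
      + 2 * \<sigma> * k * (u \<bullet> u) * (\<Sum>i\<in>UNIV. v \<bullet> T i) + real CARD('i) * (k * (u \<bullet> u))^2"
    unfolding wz by (simp add: power2_eq_square algebra_simps sum.distrib sum_distrib_left)
  also have "\<dots> = real CARD('i) * (u \<bullet> u) * ((norm v)^2 + k^2 * (u \<bullet> u))"
    using fr vV sv bound by (simp add: algebra_simps power2_eq_square)
  also have "(norm v)^2 + k^2 * (u \<bullet> u) = (norm w)^2"
    unfolding power2_norm_eq_inner wv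
    by (simp add: inner_add_left inner_add_right uv algebra_simps power2_eq_square)
  finally show ?thesis .
qed

text \<open>The bounds match because C m = N (trace identity).\<close>
lemma lifting:
  fixes T :: "'i::finite \<Rightarrow> 'a::euclidean_space"
  assumes tf: "tight_frame_on (span (range T)) T" and s: "(\<Sum>i\<in>UNIV. T i) = 0"
    and td: "two_distance T"
  shows "lifting_property T"
  unfolding lifting_property_def Let_def
proof (intro allI impI, elim conjE)
  fix u
  define V where "V = span (range T)"
  define t where "t = 1 / (real (dim V) + 1)"
  define \<sigma> where "\<sigma> = sqrt (1 - t)"
  assume uV: "\<forall>w\<in>span (range T). u \<bullet> w = 0"
    and un: "norm u = 1 / sqrt (real (dim (span (range T))) + 1)"
  obtain C where C: "\<forall>v\<in>V. (\<Sum>i\<in>UNIV. (v \<bullet> T i)^2) = C * (norm v)^2"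
    using tf unfolding tight_frame_on_def V_def by blast
  have uT: "unit_in V T" using tf unfolding tight_frame_on_def V_def by blast
  have VV: "subspace V" unfolding V_def by simp
  have d: "C * real (dim V) = real CARD('i)" by (rule tight_frame_bound_dim[OF VV uT C])
  have uu: "u \<bullet> u = t"
    using un unfolding t_def V_def by (simp add: power_divide flip: power2_norm_eq_inner)
  have ss: "\<sigma>^2 = 1 - t" unfolding \<sigma>_def t_def by (simp add: field_simps)
  have bound: "\<sigma>^2 * C = real CARD('i) * (u \<bullet> u)"
  proof -
    have "1 - t = real (dim V) * t" unfolding t_def by (simp add: field_simps)
    thus ?thesis unfolding ss uu using d by (metis mult.commute mult.left_commute)
  qed
  have TT: "T i \<bullet> T i = 1" for i using uT unfolding unit_in_def by (simp add: norm_eq_1)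
  have TV: "T i \<in> V" for i using uT unfolding unit_in_def by blast
  have uTi: "T i \<bullet> u = 0" "u \<bullet> T i = 0" for i using uV TV V_def by (auto simp: inner_commute)
  define z where "z i = \<sigma> *\<^sub>R T i + u" for i
  have zz: "z i \<bullet> z j = \<sigma>^2 * (T i \<bullet> T j) + t" for i j
    by (simp add: z_def inner_add_left inner_add_right uTi uu power2_eq_square)
  have zn: "norm (z i) = 1" for i using zz[of i i] TT ss by (simp add: norm_eq_1)
  have zW: "z i \<in> span (insert u V)" for i
    unfolding z_def by (intro span_add span_scale) (auto intro: span_base span_mono[THEN subsetD] simp: TV)
  have tf_z: "tight_frame_on (span (insert u V)) z"
    unfolding tight_frame_on_def unit_in_def z_def
    using zn zW lifted_tight_frame[OF VV TV C s _ bound] uV uu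
    by (intro conjI exI[of _ "real CARD('i) * t"]) (auto simp: t_def V_def z_def)
  obtain a b where ab: "\<forall>i j. i \<noteq> j \<longrightarrow> T i \<bullet> T j = a \<or> T i \<bullet> T j = b"
    using td unfolding two_distance_def by blast
  have "two_distance z" unfolding two_distance_def
    using zn ab zz by (intro conjI exI[of _ "\<sigma>^2 * a + t"] exI[of _ "\<sigma>^2 * b + t"]) auto
  then show "two_distance_tight_frame_on (span (insert u (span (range T))))
      (\<lambda>i. sqrt (1 - 1 / (real (dim (span (range T))) + 1)) *\<^sub>R T i + u)"
    using tf_z unfolding two_distance_tight_frame_on_def z_def \<sigma>_def t_def V_def by simp
qed

lemma gram_product_expansion:
  fixes al :: "'v::finite \<Rightarrow> 'v \<Rightarrow> real"
  assumes sy: "\<And>i j. al i j = al j i"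
  shows "(\<Sum>l\<in>UNIV. (b + be * al i l + ga * of_bool (i = l)) * (b + be * al l j + ga * of_bool (l = j))) =
    b^2 * real CARD('v) + b * be * (\<Sum>l\<in>UNIV. al i l) + b * be * (\<Sum>l\<in>UNIV. al j l) + 2 * b * ga
    + be^2 * (\<Sum>l\<in>UNIV. al i l * al l j) + 2 * be * ga * al i j + ga^2 * of_bool (i = j)"
proof -
  have "(\<Sum>l\<in>UNIV. (b + be * al i l + ga * of_bool (i = l)) * (b + be * al l j + ga * of_bool (l = j))) =
    (\<Sum>l\<in>UNIV. b^2 + b * be * al i l + b * be * al j l + be^2 * (al i l * al l j)
      + b * ga * of_bool (l = j) + b * ga * of_bool (i = l)
      + be * ga * (al i l * of_bool (l = j)) + be * ga * (of_bool (i = l) * al l j)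
      + ga^2 * (of_bool (i = l) * of_bool (l = j)))"
    by (intro sum.cong refl) (simp add: sy[of _ j] algebra_simps power2_eq_square)
  also have "\<dots> = b^2 * real CARD('v) + b * be * (\<Sum>l\<in>UNIV. al i l) + b * be * (\<Sum>l\<in>UNIV. al j l)
      + be^2 * (\<Sum>l\<in>UNIV. al i l * al l j) + b * ga + b * ga + be * ga * al i j + be * ga * al i j
      + ga^2 * of_bool (i = j)"
    by (simp add: sum.distrib sum_distrib_left[symmetric] of_bool_def if_distrib[where f="\<lambda>x. _ * x"]
        if_distrib[where f="\<lambda>x. x * _"] cong: if_cong)
  finally show ?thesis by simp
qed

lemma gram_square_counts:
  fixes z :: "'v::finite \<Rightarrow> 'a::real_inner" and \<Gamma> :: "'v \<Rightarrow> 'v \<Rightarrow> bool"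
  assumes sym: "\<And>i j. \<Gamma> i j \<longleftrightarrow> \<Gamma> j i"
    and g: "\<And>i j. z i \<bullet> z j = b + be * of_bool (\<Gamma> i j) + ga * of_bool (i = j)"
    and sq: "\<And>i j. (\<Sum>l\<in>UNIV. (z i \<bullet> z l) * (z l \<bullet> z j)) = C * (z i \<bullet> z j)"
  shows "C * (b + be * of_bool (\<Gamma> i j) + ga * of_bool (i = j)) =
      b^2 * real CARD('v) + b * be * real (card {l. \<Gamma> i l}) + b * be * real (card {l. \<Gamma> j l})
      + 2 * b * ga + be^2 * real (card {l. \<Gamma> i l \<and> \<Gamma> j l})
      + 2 * be * ga * of_bool (\<Gamma> i j) + ga^2 * of_bool (i = j)"
proof -
  define al where "al i j = (of_bool (\<Gamma> i j) :: real)" for i j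
  have alsy: "al i j = al j i" for i j unfolding al_def using sym by simp
  have csum: "(\<Sum>l\<in>UNIV. al i l * al l j) = real (card {l. \<Gamma> i l \<and> \<Gamma> j l})"
    unfolding al_def using sym by (simp add: of_bool_conj[symmetric] Int_def)
  have "C * (b + be * al i j + ga * of_bool (i = j)) = (\<Sum>l\<in>UNIV. (z i \<bullet> z l) * (z l \<bullet> z j))"
    using sq g unfolding al_def by simp
  also have "\<dots> = (\<Sum>l\<in>UNIV. (b + be * al i l + ga * of_bool (i = l)) * (b + be * al l j + ga * of_bool (l = j)))"
    unfolding al_def by (simp only: g)
  finally show ?thesis
    unfolding gram_product_expansion[of al, OF alsy] csum by (simp add: al_def)
qed

lemma constant_on_pairs:
  assumes "\<And>u w u' w'. P u w \<Longrightarrow> P u' w' \<Longrightarrow> f u w = f u' w'"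
  shows "\<exists>c. \<forall>u w. P u w \<longrightarrow> f u w = c"
proof (cases "\<exists>u w. P u w")
  case True
  then obtain u0 w0 where "P u0 w0" by blast
  then show ?thesis using assms by blast
qed blast

text \<open>The diagonal entries of
  G^2 = C G fix the degrees (the coefficient is (a - b)(a + b)), the off-diagonal entries
  then fix the common-neighbour counts (the coefficient is (a - b)^2).\<close>
lemma two_distance_gram_srg:
  fixes x :: "'v::finite \<Rightarrow> 'a::real_inner"
  assumes un: "\<And>i. norm (x i) = 1"
    and sq: "\<And>i j. (\<Sum>l\<in>UNIV. (x i \<bullet> x l) * (x l \<bullet> x j)) = C * (x i \<bullet> x j)"
    and two: "\<And>i j. i \<noteq> j \<Longrightarrow> x i \<bullet> x j = a \<or> x i \<bullet> x j = b"
    and ab: "a \<noteq> b" "a \<noteq> - b"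
  shows "srg (\<lambda>i j. i \<noteq> j \<and> x i \<bullet> x j = a)"
proof -
  define \<Gamma> where "\<Gamma> = (\<lambda>i j. i \<noteq> j \<and> x i \<bullet> x j = a)"
  define d where "d i = real (card {l. \<Gamma> i l})" for i
  define cn where "cn i j = real (card {l. \<Gamma> i l \<and> \<Gamma> j l})" for i j
  have sy: "\<Gamma> i j \<longleftrightarrow> \<Gamma> j i" for i j unfolding \<Gamma>_def by (auto simp: inner_commute)
  have irr: "\<not> \<Gamma> i i" for i unfolding \<Gamma>_def by simp
  have g: "x i \<bullet> x j = b + (a - b) * of_bool (\<Gamma> i j) + (1 - b) * of_bool (i = j)" for i j
    using two[of i j] un[of i] unfolding \<Gamma>_def by (auto simp: norm_eq_1)
  note ex = gram_square_counts[OF sy g sq, folded d_def cn_def]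
  have ne: "2 * b * (a - b) + (a - b)^2 \<noteq> 0"
  proof -
    have "2 * b * (a - b) + (a - b)^2 = (a - b) * (a + b)" by (simp add: algebra_simps power2_eq_square)
    moreover have "a + b \<noteq> 0" using ab(2) by linarith
    ultimately show ?thesis using ab(1) by simp
  qed
  have "(2 * b * (a - b) + (a - b)^2) * d i
      = C * (b + (1 - b)) - b^2 * real CARD('v) - 2 * b * (1 - b) - (1 - b)^2" for i
    using ex[of i i] irr[of i] by (simp add: cn_def d_def algebra_simps)
  hence dconst: "d i = d j" for i j using ne by (metis mult_cancel_left)
  have be2: "(a - b)^2 \<noteq> 0" using ab(1) by simp
  have adj: "(a - b)^2 * cn i j = C * (b + (a - b)) - b^2 * real CARD('v) - 2 * b * (a - b) * d i
      - 2 * b * (1 - b) - 2 * (a - b) * (1 - b)" if "\<Gamma> i j" for i j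
  proof -
    have "i \<noteq> j" using that irr by auto
    thus ?thesis using ex[of i j] that dconst[of j i] by (simp add: algebra_simps)
  qed
  have "cn u w = cn u' w'" if "u \<noteq> w \<and> \<Gamma> u w" "u' \<noteq> w' \<and> \<Gamma> u' w'" for u w u' w'
  proof -
    have "(a - b)^2 * cn u w = (a - b)^2 * cn u' w'"
      using adj[of u w] adj[of u' w'] that dconst[of u u'] by simp
    thus ?thesis using be2 by simp
  qed
  then have "\<exists>c. \<forall>u w. u \<noteq> w \<and> \<Gamma> u w \<longrightarrow> cn u w = c" by (rule constant_on_pairs)
  then obtain la where la: "\<And>u w. u \<noteq> w \<and> \<Gamma> u w \<Longrightarrow> cn u w = la" by blast
  have nonadj: "(a - b)^2 * cn i j = C * b - b^2 * real CARD('v) - 2 * b * (a - b) * d i - 2 * b * (1 - b)"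
    if "i \<noteq> j" "\<not> \<Gamma> i j" for i j
    using ex[of i j] that dconst[of j i] by (simp add: algebra_simps)
  have "cn u w = cn u' w'" if "u \<noteq> w \<and> \<not> \<Gamma> u w" "u' \<noteq> w' \<and> \<not> \<Gamma> u' w'" for u w u' w'
  proof -
    have "(a - b)^2 * cn u w = (a - b)^2 * cn u' w'"
      using nonadj[of u w] nonadj[of u' w'] that dconst[of u u'] by simp
    thus ?thesis using be2 by simp
  qed
  then have "\<exists>c. \<forall>u w. u \<noteq> w \<and> \<not> \<Gamma> u w \<longrightarrow> cn u w = c" by (rule constant_on_pairs)
  then obtain mu where mu: "\<And>u w. u \<noteq> w \<and> \<not> \<Gamma> u w \<Longrightarrow> cn u w = mu" by blast
  have kconst: "card {l. \<Gamma> u l} = card {l. \<Gamma> undefined l}" for u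
    using dconst[of u undefined] unfolding d_def by simp
  have "card {z. \<Gamma> u z \<and> \<Gamma> w z} = nat \<lfloor>la\<rfloor>" if "u \<noteq> w" "\<Gamma> u w" for u w
    using la[of u w] that unfolding cn_def by (metis floor_of_nat nat_int)
  moreover have "card {z. \<Gamma> u z \<and> \<Gamma> w z} = nat \<lfloor>mu\<rfloor>" if "u \<noteq> w" "\<not> \<Gamma> u w" for u w
    using mu[of u w] that unfolding cn_def by (metis floor_of_nat nat_int)
  ultimately show ?thesis unfolding \<Gamma>_def[symmetric] srg_def
    using sy irr kconst by blast
qed

lemma closest_point_orthogonal:
  fixes S :: "'a::euclidean_space set"
  assumes S: "subspace S" and p: "p \<in> S" and orth: "\<And>z. z \<in> S \<Longrightarrow> (x - p) \<bullet> z = 0"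
  shows "closest_point S x = p"
proof -
  have "p = closest_point S x"
  proof (rule closest_point_unique)
    show "convex S" "closed S" using S by (simp_all add: subspace_imp_convex closed_subspace)
    show "p \<in> S" by (rule p)
    show "\<forall>z\<in>S. dist x p \<le> dist x z"
    proof
      fix z assume z: "z \<in> S"
      have "(x - p) \<bullet> (p - z) = 0" using orth S p z by (simp add: subspace_diff)
      hence "(norm (x - z))^2 = (norm (x - p))^2 + (norm (p - z))^2"
        using norm_add_Pythagorean[of "x - p" "p - z"] by (simp add: orthogonal_def)
      hence "(dist x p)^2 \<le> (dist x z)^2" by (simp add: dist_norm)
      thus "dist x p \<le> dist x z" by (simp add: power2_le_iff_abs_le)
    qed
  qed
  thus ?thesis by simp
qed

locale nontrivial_srg =
  fixes G :: "'v::finite \<Rightarrow> 'v \<Rightarrow> bool" and k la mu :: nat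
  assumes sym: "G u w \<longleftrightarrow> G w u" and irr: "\<not> G u u"
    and deg: "card {w. G u w} = k"
    and la_count: "u \<noteq> w \<Longrightarrow> G u w \<Longrightarrow> card {z. G u z \<and> G w z} = la"
    and mu_count: "u \<noteq> w \<Longrightarrow> \<not> G u w \<Longrightarrow> card {z. G u z \<and> G w z} = mu"
    and ncomp: "\<not> complete_graph G" and nemp: "\<not> empty_graph G"
begin

definition \<alpha> :: "'v \<Rightarrow> 'v \<Rightarrow> real" where "\<alpha> i j = of_bool (G i j)"
definition N :: real where "N = real CARD('v)"

lemma alpha_sym: "\<alpha> i j = \<alpha> j i" unfolding \<alpha>_def using sym by simp

lemma deg_sum: "(\<Sum>j\<in>UNIV. \<alpha> i j) = real k"
  unfolding \<alpha>_def using deg[of i] by simp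

lemma deg_sum_column: "(\<Sum>j\<in>UNIV. \<alpha> j i) = real k"
proof -
  have "(\<Sum>j\<in>UNIV. \<alpha> j i) = (\<Sum>j\<in>UNIV. \<alpha> i j)" by (rule sum.cong) (auto intro: alpha_sym)
  thus ?thesis using deg_sum by simp
qed

lemma common_neighbours_sum: "(\<Sum>j\<in>UNIV. \<alpha> i j * \<alpha> j l) =
   real mu + (real la - real mu) * \<alpha> i l + (real k - real mu) * of_bool (i = l)"
proof -
  have "(\<Sum>j\<in>UNIV. \<alpha> i j * \<alpha> j l) = real (card {z. G i z \<and> G l z})"
    unfolding \<alpha>_def using sym by (simp add: of_bool_conj[symmetric] Int_def)
  also have "\<dots> = real mu + (real la - real mu) * \<alpha> i l + (real k - real mu) * of_bool (i = l)"
  proof (cases "i = l")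
    case True thus ?thesis using deg[of i] irr unfolding \<alpha>_def by simp
  next
    case False thus ?thesis using la_count[of i l] mu_count[of i l] unfolding \<alpha>_def by auto
  qed
  finally show ?thesis .
qed

lemma N_pos: "N > 0" unfolding N_def by simp

text \<open>Row sums of alpha^2 give the standard identity k^2 = (k - mu) + (la - mu) k + mu N.\<close>
lemma srg_identity: "real k ^ 2 = (real k - real mu) + (real la - real mu) * real k + real mu * N"
proof -
  fix i :: 'v
  have "(\<Sum>l\<in>UNIV. \<Sum>j\<in>UNIV. \<alpha> i j * \<alpha> j l) = (\<Sum>j\<in>UNIV. \<alpha> i j * (\<Sum>l\<in>UNIV. \<alpha> j l))"
    by (subst sum.swap) (simp add: sum_distrib_left)
  also have "\<dots> = real k ^ 2" by (simp add: deg_sum sum_distrib_right[symmetric] power2_eq_square)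
  finally have 1: "(\<Sum>l\<in>UNIV. \<Sum>j\<in>UNIV. \<alpha> i j * \<alpha> j l) = real k ^ 2" .
  have "(\<Sum>l\<in>UNIV. \<Sum>j\<in>UNIV. \<alpha> i j * \<alpha> j l) =
     (\<Sum>l\<in>UNIV. real mu + (real la - real mu) * \<alpha> i l + (real k - real mu) * of_bool (i = l))"
    by (simp add: common_neighbours_sum)
  also have "\<dots> = real mu * N + (real la - real mu) * real k + (real k - real mu)"
    by (simp add: sum.distrib sum_distrib_left[symmetric] deg_sum N_def)
  finally show ?thesis using 1 by simp
qed

lemma adj_pair: obtains p q where "G p q" "p \<noteq> q"
  using nemp irr unfolding empty_graph_def by blast

lemma nadj_pair: obtains p q where "\<not> G p q" "p \<noteq> q"
  using ncomp unfolding complete_graph_def by blast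

lemma la_lt: "real la + 1 \<le> real k"
proof -
  obtain p q where pq: "G p q" "p \<noteq> q" by (rule adj_pair)
  have "{z. G p z \<and> G q z} \<subseteq> {z. G p z} - {q}" using irr by auto
  hence "card {z. G p z \<and> G q z} \<le> card ({z. G p z} - {q})" by (intro card_mono) auto
  also have "\<dots> = k - 1" using deg[of p] pq by simp
  finally have "la \<le> k - 1" using la_count[OF pq(2) pq(1)] by simp
  moreover have "k \<ge> 1" using deg[of p] pq
    by (metis One_nat_def Suc_leI card_gt_0_iff empty_iff finite mem_Collect_eq)
  ultimately show ?thesis by linarith
qed

lemma mu_le: "real mu \<le> real k"
proof -
  obtain p q where pq: "\<not> G p q" "p \<noteq> q" by (rule nadj_pair)
  have "card {z. G p z \<and> G q z} \<le> card {z. G p z}" by (intro card_mono) auto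
  thus ?thesis using mu_count[OF pq(2) pq(1)] deg[of p] by simp
qed

text \<open>The eigenvalues of alpha on 1-perp are the roots r1 > r2 of t^2 - (la - mu) t - (k - mu).
  The discriminant is positive since the graph is neither complete nor empty.\<close>
definition disc :: real where "disc = (real la - real mu)^2 + 4 * (real k - real mu)"
definition r1 :: real where "r1 = (real la - real mu + sqrt disc) / 2"
definition r2 :: real where "r2 = (real la - real mu - sqrt disc) / 2"

lemma disc_pos: "disc > 0"
proof (cases "real k = real mu")
  case True
  hence "real la \<noteq> real mu" using la_lt by linarith
  thus ?thesis unfolding disc_def using True by simp
next
  case False
  hence "real k - real mu > 0" using mu_le by linarith
  thus ?thesis unfolding disc_def by (simp add: add_nonneg_pos)
qed

lemma r12: "r1 > r2" "r1 + r2 = real la - real mu" "r1 * r2 = real mu - real k"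
proof -
  show "r1 > r2" unfolding r1_def r2_def using disc_pos by simp
  show "r1 + r2 = real la - real mu" unfolding r1_def r2_def by (simp add: field_simps)
  have "sqrt disc * sqrt disc = disc" using disc_pos by simp
  thus "r1 * r2 = real mu - real k" unfolding r1_def r2_def disc_def
    by (simp add: field_simps power2_eq_square)
qed

definition Amul :: "real^'v \<Rightarrow> real^'v" where "Amul v = adj_matrix G *v v"
definition total :: "real^'v \<Rightarrow> real" where "total v = (\<Sum>j\<in>UNIV. v $ j)"

lemma Amul_nth: "Amul v $ i = (\<Sum>j\<in>UNIV. \<alpha> i j * v $ j)"
  unfolding Amul_def adj_matrix_def matrix_vector_mult_def \<alpha>_def by (simp add: of_bool_def)

lemma inner_one: "v \<bullet> vec 1 = total v"
  unfolding total_def inner_vec_def by simp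

lemma Amul_square: "(\<Sum>j\<in>UNIV. \<alpha> i j * Amul v $ j) =
   real mu * total v + (real la - real mu) * Amul v $ i + (real k - real mu) * v $ i"
proof -
  have "(\<Sum>j\<in>UNIV. \<alpha> i j * Amul v $ j) = (\<Sum>l\<in>UNIV. (\<Sum>j\<in>UNIV. \<alpha> i j * \<alpha> j l) * v $ l)"
    by (simp add: Amul_nth sum_distrib_left sum_distrib_right mult.assoc) (rule sum.swap)
  also have "\<dots> = (\<Sum>l\<in>UNIV. real mu * v $ l + (real la - real mu) * (\<alpha> i l * v $ l)
       + (real k - real mu) * (of_bool (i = l) * v $ l))"
    by (intro sum.cong refl) (simp only: common_neighbours_sum, simp add: algebra_simps)
  also have "\<dots> = real mu * total v + (real la - real mu) * Amul v $ i + (real k - real mu) * v $ i"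
    by (simp add: sum.distrib sum_distrib_left[symmetric] total_def Amul_nth)
  finally show ?thesis .
qed

lemma Amul_add: "Amul (v + w) = Amul v + Amul w" unfolding Amul_def by (simp add: matrix_vector_right_distrib)
lemma Amul_scale: "Amul (c *\<^sub>R v) = c *\<^sub>R Amul v" unfolding Amul_def by (simp add: matrix_vector_mult_scaleR)
lemma Amul_zero: "Amul 0 = 0" unfolding Amul_def by simp
lemma Amul_sym: "Amul v \<bullet> w = v \<bullet> Amul w"
proof -
  have "Amul v \<bullet> w = (\<Sum>i\<in>UNIV. \<Sum>j\<in>UNIV. \<alpha> i j * v $ j * w $ i)"
    by (simp add: inner_vec_def Amul_nth sum_distrib_right)
  also have "\<dots> = (\<Sum>j\<in>UNIV. \<Sum>i\<in>UNIV. \<alpha> j i * w $ i * v $ j)"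
    by (subst sum.swap) (simp add: alpha_sym mult.commute mult.left_commute)
  also have "\<dots> = v \<bullet> Amul w"
    by (simp add: inner_vec_def Amul_nth sum_distrib_right sum_distrib_left mult.commute mult.left_commute)
  finally show ?thesis .
qed

lemma total_Amul: "total (Amul v) = real k * total v"
proof -
  have "total (Amul v) = (\<Sum>j\<in>UNIV. (\<Sum>i\<in>UNIV. \<alpha> i j) * v $ j)"
    by (simp add: total_def Amul_nth sum_distrib_right) (rule sum.swap)
  also have "\<dots> = real k * total v" by (simp add: deg_sum_column total_def sum_distrib_left)
  finally show ?thesis .
qed

end

text \<open>For an ordering (r, r') of the two roots, the orthogonal projection onto the eigenspace of
  r in 1-perp is (alpha - r' I - (k - r')/N J) / (r - r').\<close>
locale srg_projection = nontrivial_srg G k la mu for G :: "'v::finite \<Rightarrow> 'v \<Rightarrow> bool" and k la mu +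
  fixes r r' :: real
  assumes rne: "r \<noteq> r'" and rsum: "r + r' = real la - real mu" and rprod: "r * r' = real mu - real k"
begin

definition proj :: "real^'v \<Rightarrow> real^'v" where
  "proj v = (\<chi> i. (Amul v $ i - r' * v $ i - (real k - r') / N * total v) / (r - r'))"

definition eigsp :: "(real^'v) set" where "eigsp = {v. v \<bullet> vec 1 = 0 \<and> Amul v = r *\<^sub>R v}"

lemma proj_nth: "proj v $ i = (Amul v $ i - r' * v $ i - (real k - r') / N * total v) / (r - r')"
  unfolding proj_def by simp

lemma r_diff: "r - r' \<noteq> 0" using rne by simp

lemma total_proj: "total (proj v) = 0"
proof -
  have "total (proj v) = (\<Sum>i\<in>UNIV. Amul v $ i - r' * v $ i - (real k - r') / N * total v) / (r - r')"
    by (simp add: total_def proj_nth sum_divide_distrib)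
  also have "(\<Sum>i\<in>UNIV. Amul v $ i - r' * v $ i - (real k - r') / N * total v) =
      total (Amul v) - r' * total v - N * ((real k - r') / N * total v)"
    by (simp add: sum_subtractf total_def sum_distrib_left N_def)
  also have "\<dots> = 0" using N_pos by (simp add: total_Amul field_simps)
  finally show ?thesis by simp
qed

text \<open>The all-ones component: by the srg identity, mu - (k - r') k / N = -r (k - r') / N.\<close>
lemma ones_coefficient: "real mu - (real k - r') * real k / N = - r * (real k - r') / N"
proof -
  have "(real k - r') * real k - r * (real k - r') = real k * real k - (r + r') * real k + r * r'"
    by (simp add: algebra_simps)
  also have "\<dots> = real k * real k - (real la - real mu) * real k + (real mu - real k)"
    using rsum rprod by simp
  also have "\<dots> = real mu * N" using srg_identity unfolding power2_eq_square by simp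
  finally have "real mu * N = (real k - r') * real k - r * (real k - r')" by simp
  thus ?thesis using N_pos by (simp add: field_simps)
qed

text \<open>proj maps into the r-eigenspace: apply alpha and use alpha^2 = mu J + (la - mu) alpha + (k - mu) I.\<close>
lemma proj_eigen: "Amul (proj v) = r *\<^sub>R proj v"
proof -
  show ?thesis
  proof (subst vec_eq_iff, intro allI)
    fix i
    have "Amul (proj v) $ i = (\<Sum>j\<in>UNIV. \<alpha> i j * ((Amul v $ j - r' * v $ j - (real k - r') / N * total v) / (r - r')))"
      by (simp add: Amul_nth proj_nth)
    also have "\<dots> = (\<Sum>j\<in>UNIV. \<alpha> i j * Amul v $ j - r' * (\<alpha> i j * v $ j) - (real k - r') / N * total v * \<alpha> i j) / (r - r')"
      unfolding sum_divide_distrib by (intro sum.cong refl) (simp add: diff_divide_distrib algebra_simps)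
    also have "\<dots> = ((\<Sum>j\<in>UNIV. \<alpha> i j * Amul v $ j) - r' * Amul v $ i - (real k - r') / N * total v * real k) / (r - r')"
      by (simp add: sum_subtractf sum_distrib_left[symmetric] sum_divide_distrib[symmetric] Amul_nth deg_sum)
    also have "\<dots> = (real mu * total v + (real la - real mu - r') * Amul v $ i + (real k - real mu) * v $ i
          - (real k - r') * real k / N * total v) / (r - r')"
      by (subst Amul_square, rule arg_cong[where f="\<lambda>t. t / (r - r')"], simp add: algebra_simps)
    also have "\<dots> = ((real mu - (real k - r') * real k / N) * total v + r * Amul v $ i - r * r' * v $ i) / (r - r')"
    proof -
      have e0: "real la - real mu - r' = r" using rsum by simp
      have e1: "(real la - real mu - r') * Amul v $ i = r * Amul v $ i" unfolding e0 ..
      have e2: "(real k - real mu) * v $ i = - (r * r') * v $ i" using rprod by simp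
      show ?thesis unfolding e1 e2 by (simp add: algebra_simps)
    qed
    also have "\<dots> = r * proj v $ i"
      unfolding ones_coefficient proj_nth using N_pos rne by (simp add: field_simps)
    finally show "Amul (proj v) $ i = (r *\<^sub>R proj v) $ i" by simp
  qed
qed

lemma proj_in: "proj v \<in> eigsp"
  unfolding eigsp_def using proj_eigen total_proj inner_one by simp

lemma proj_fix: assumes "v \<in> eigsp" shows "proj v = v"
proof -
  have s: "total v = 0" and a: "Amul v = r *\<^sub>R v" using assms inner_one unfolding eigsp_def by auto
  show ?thesis
    by (simp add: vec_eq_iff proj_nth s a field_simps rne)
qed

lemma proj_inner: "proj v \<bullet> w = (Amul v \<bullet> w - r' * (v \<bullet> w) - (real k - r') / N * total v * total w) / (r - r')"
proof -
  have "proj v \<bullet> w = (\<Sum>i\<in>UNIV. (Amul v $ i * w $ i - r' * (v $ i * w $ i) - (real k - r') / N * total v * w $ i)) / (r - r')"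
    unfolding inner_vec_def proj_nth sum_divide_distrib
    by (intro sum.cong refl) (simp add: diff_divide_distrib algebra_simps)
  also have "(\<Sum>i\<in>UNIV. (Amul v $ i * w $ i - r' * (v $ i * w $ i) - (real k - r') / N * total v * w $ i))
     = Amul v \<bullet> w - r' * (v \<bullet> w) - (real k - r') / N * total v * total w"
    by (simp add: sum_subtractf inner_vec_def sum_distrib_left total_def)
  finally show ?thesis .
qed

lemma proj_sym: "proj v \<bullet> w = v \<bullet> proj w"
proof -
  have "proj v \<bullet> w = w \<bullet> proj v" by (simp add: inner_commute)
  have a: "w \<bullet> Amul v = v \<bullet> Amul w" using Amul_sym inner_commute by metis
  have "v \<bullet> proj w = proj w \<bullet> v" by (simp add: inner_commute)
  also have "\<dots> = (Amul w \<bullet> v - r' * (w \<bullet> v) - (real k - r') / N * total w * total v) / (r - r')" by (rule proj_inner)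
  also have "\<dots> = proj v \<bullet> w" unfolding proj_inner using a by (simp add: inner_commute mult.commute mult.left_commute)
  finally show ?thesis by simp
qed

lemma eigsp_subspace: "subspace eigsp"
  unfolding subspace_def eigsp_def
  by (auto simp: inner_add_left Amul_add Amul_scale scaleR_add_right Amul_zero)

lemma closest_point_eigsp: "closest_point eigsp x = proj x"
proof (rule closest_point_orthogonal[OF eigsp_subspace proj_in])
  fix z assume z: "z \<in> eigsp"
  have "x \<bullet> z = proj x \<bullet> z" using proj_sym[of x z] proj_fix[OF z] by simp
  thus "(x - proj x) \<bullet> z = 0" by (simp add: inner_diff_left)
qed

definition pgram :: "'v \<Rightarrow> 'v \<Rightarrow> real" where
  "pgram i j = (\<alpha> i j - r' * of_bool (i = j) - (real k - r') / N) / (r - r')"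

lemma proj_axis: "proj (axis i 1) $ j = pgram j i"
proof -
  have "Amul (axis i 1) $ j = (\<Sum>ja\<in>UNIV. if ja = i then \<alpha> j i else 0)"
    unfolding Amul_nth by (intro sum.cong) (auto simp: axis_def)
  hence "Amul (axis i 1) $ j = \<alpha> j i" by simp
  moreover have "total (axis i 1) = 1" by (simp add: total_def axis_def)
  ultimately show ?thesis unfolding proj_nth pgram_def by (simp add: axis_def of_bool_def)
qed

lemma proj_axis_inner: "proj (axis i 1) \<bullet> proj (axis j 1) = pgram i j"
proof -
  have "proj (axis i 1) \<bullet> proj (axis j 1) = axis i 1 \<bullet> proj (proj (axis j 1))" by (rule proj_sym)
  also have "\<dots> = axis i 1 \<bullet> proj (axis j 1)" using proj_fix[OF proj_in] by simp
  also have "\<dots> = pgram i j" by (simp add: inner_axis' proj_axis)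
  finally show ?thesis .
qed

definition pdiag :: real where "pdiag = (- r' - (real k - r') / N) / (r - r')"

lemma pgram_diag: "pgram i i = pdiag" unfolding pgram_def pdiag_def \<alpha>_def using irr by simp

text \<open>pdiag > 0: otherwise all proj e_i vanish, but pgram takes different values on adjacent
  and non-adjacent pairs.\<close>
lemma pdiag_pos: "pdiag > 0"
proof -
  have "pdiag \<ge> 0" by (metis proj_axis_inner pgram_diag inner_ge_zero)
  moreover have "pdiag \<noteq> 0"
  proof
    assume d0: "pdiag = 0"
    have z: "pgram i j = 0" for i j
    proof -
      have "proj (axis i 1) \<bullet> proj (axis i 1) = 0" using proj_axis_inner pgram_diag d0 by simp
      hence "proj (axis i 1) = 0" by simp
      thus ?thesis using proj_axis_inner[of i j] by simp
    qed
    obtain p q where pq: "G p q" "p \<noteq> q" by (rule adj_pair)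
    obtain p' q' where pq': "\<not> G p' q'" "p' \<noteq> q'" by (rule nadj_pair)
    have "(1 - (real k - r') / N) / (r - r') = 0" using z[of p q] pq unfolding pgram_def \<alpha>_def by simp
    moreover have "(0 - (real k - r') / N) / (r - r') = 0" using z[of p' q'] pq' unfolding pgram_def \<alpha>_def by simp
    ultimately show False using r_diff by simp
  qed
  ultimately show ?thesis by simp
qed

lemma proj_axis_nonzero: "proj (axis i 1) \<noteq> 0"
  using proj_axis_inner[of i i] pgram_diag[of i] pdiag_pos by auto

definition embed :: "'v \<Rightarrow> real^'v" where "embed i = (1 / sqrt pdiag) *\<^sub>R proj (axis i 1)"

lemma embed_normalized_projection:
  "(let p = closest_point eigsp (axis i 1) in p /\<^sub>R norm p) = embed i"
proof -
  have "norm (proj (axis i 1)) = sqrt pdiag"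
    unfolding norm_eq_sqrt_inner proj_axis_inner pgram_diag ..
  thus ?thesis unfolding Let_def closest_point_eigsp embed_def by (simp add: divide_inverse_commute)
qed

text \<open>Gram matrix, membership in eigsp, zero sum and frame identity of the embedding; the frame
  identity holds because v . proj e_i = v_i for v in eigsp.\<close>
lemma embed_inner: "embed i \<bullet> embed j = pgram i j / pdiag"
  unfolding embed_def using pdiag_pos by (simp add: proj_axis_inner real_sqrt_mult[symmetric])

lemma embed_eigsp: "embed i \<in> eigsp" unfolding embed_def using eigsp_subspace proj_in by (simp add: subspace_scale)

lemma embed_sum: "(\<Sum>i\<in>UNIV. embed i) = 0"
proof -
  have "(\<Sum>i\<in>UNIV. proj (axis i 1)) = 0"
  proof (subst vec_eq_iff, intro allI)
    fix l
    have "(\<Sum>i\<in>UNIV. proj (axis i 1)) $ l = (\<Sum>i\<in>UNIV. pgram l i)" by (simp add: sum_component proj_axis)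
    also have "\<dots> = (\<Sum>i\<in>UNIV. \<alpha> l i - r' * of_bool (l = i) - (real k - r') / N) / (r - r')"
      unfolding pgram_def sum_divide_distrib ..
    also have "(\<Sum>i\<in>UNIV. \<alpha> l i - r' * of_bool (l = i) - (real k - r') / N) = real k - r' - N * ((real k - r') / N)"
      by (simp add: sum_subtractf deg_sum N_def)
    also have "\<dots> = 0" using N_pos by simp
    finally show "(\<Sum>i\<in>UNIV. proj (axis i 1)) $ l = 0 $ l" by simp
  qed
  thus ?thesis unfolding embed_def by (simp add: scaleR_sum_right[symmetric])
qed

lemma embed_frame: "v \<in> eigsp \<Longrightarrow> (\<Sum>i\<in>UNIV. (v \<bullet> embed i)^2) = (1 / pdiag) * (norm v)^2"
proof -
  assume v: "v \<in> eigsp"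
  have "v \<bullet> embed i = v $ i / sqrt pdiag" for i
  proof -
    have "v \<bullet> proj (axis i 1) = proj v \<bullet> axis i 1" using proj_sym[of v "axis i 1"] by simp
    also have "\<dots> = v $ i" using proj_fix[OF v] by (simp add: inner_axis)
    finally show ?thesis unfolding embed_def by simp
  qed
  hence "(\<Sum>i\<in>UNIV. (v \<bullet> embed i)^2) = (\<Sum>i\<in>UNIV. (v $ i)^2) / pdiag"
    using pdiag_pos by (simp add: power_divide sum_divide_distrib)
  also have "(\<Sum>i\<in>UNIV. (v $ i)^2) = (norm v)^2"
    unfolding power2_norm_eq_inner inner_vec_def by (simp add: power2_eq_square)
  finally show ?thesis by simp
qed

lemma embed_properties:
  "spherical_2design_on (span (range embed)) embed \<and> two_distance_tight_frame_on (span (range embed)) embed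
   \<and> lifting_property embed"
proof -
  have VE: "span (range embed) \<subseteq> eigsp" by (rule span_minimal) (auto simp: embed_eigsp eigsp_subspace)
  have un: "norm (embed i) = 1" for i
    using embed_inner[of i i] pgram_diag pdiag_pos by (simp add: norm_eq_1)
  have tf: "tight_frame_on (span (range embed)) embed"
    unfolding tight_frame_on_def unit_in_def
    using un VE embed_frame pdiag_pos by (intro conjI exI[of _ "1 / pdiag"]) (auto intro: span_base)
  have td: "two_distance embed"
  proof -
    have "\<forall>i j. i \<noteq> j \<longrightarrow> embed i \<bullet> embed j = ((1 - (real k - r') / N) / (r - r')) / pdiag
        \<or> embed i \<bullet> embed j = ((0 - (real k - r') / N) / (r - r')) / pdiag"
      by (auto simp: embed_inner pgram_def \<alpha>_def)
    thus ?thesis unfolding two_distance_def using un by blast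
  qed
  show ?thesis
    using zero_sum_tight_frame_design[OF subspace_span tf embed_sum] tf td lifting[OF tf embed_sum td]
    unfolding two_distance_tight_frame_on_def by blast
qed
lemma gram_eq_embed:
  fixes z :: "'v \<Rightarrow> 'a::real_inner"
  assumes g: "\<And>i j. z i \<bullet> z j = b + be * \<alpha> i j + ga * of_bool (i = j)"
    and gz1: "\<And>i. z i \<bullet> z i = 1"
    and c1: "ga + be * r' = 0" and c2: "b * N + be * real k + ga = 0"
  shows "z i \<bullet> z j = embed i \<bullet> embed j"
proof -
  have nn: "N \<noteq> 0" using N_pos by simp
  have bN: "b * N = - (be * (real k - r'))" using c1 c2 by algebra
  have hb: "b = - (be * (real k - r')) / N" using bN nn by (simp add: field_simps)
  have gh: "z i \<bullet> z j = be * (r - r') * pgram i j" for i j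
  proof -
    have "be * (r - r') * pgram i j = be * (\<alpha> i j - r' * of_bool (i = j) - (real k - r') / N)"
      unfolding pgram_def using r_diff by simp
    also have "\<dots> = b + be * \<alpha> i j + ga * of_bool (i = j)"
      using hb c1 by (simp add: algebra_simps diff_divide_distrib)
    finally show ?thesis using g by simp
  qed
  have diag: "be * (r - r') * pdiag = 1" using gh[of i i] gz1[of i] pgram_diag[of i] by simp
  have inv: "be * (r - r') = 1 / pdiag" using diag pdiag_pos by (simp add: eq_divide_eq)
  have "embed i \<bullet> embed j = pgram i j / pdiag" by (rule embed_inner)
  also have "\<dots> = be * (r - r') * pgram i j" unfolding inv by simp
  finally show ?thesis using gh by simp
qed

end

context nontrivial_srg begin

sublocale p1: srg_projection G k la mu r1 r2
  by unfold_locales (use r12 in auto)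

sublocale p2: srg_projection G k la mu r2 r1
  by unfold_locales (use r12 in \<open>auto simp: algebra_simps\<close>)

lemma eigenvalue_root:
  assumes v: "v \<noteq> 0" "total v = 0" "Amul v = c *\<^sub>R v"
  shows "c = r1 \<or> c = r2"
proof -
  obtain i where vi: "v $ i \<noteq> 0" using v(1) by (metis vec_eq_iff zero_index)
  have avj: "\<And>j. Amul v $ j = c * v $ j" using v(3) by simp
  have "(\<Sum>j\<in>UNIV. \<alpha> i j * Amul v $ j) = c * (\<Sum>j\<in>UNIV. \<alpha> i j * v $ j)"
    by (simp add: avj sum_distrib_left algebra_simps)
  also have "\<dots> = c * Amul v $ i" by (simp add: Amul_nth)
  finally have "(\<Sum>j\<in>UNIV. \<alpha> i j * Amul v $ j) = c * Amul v $ i" .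
  hence "c * (c * v $ i) = (real la - real mu) * (c * v $ i) + (real k - real mu) * v $ i"
    using Amul_square[of i v] v by simp
  hence "(c * c - (real la - real mu) * c - (real k - real mu)) * v $ i = 0"
    by (simp add: algebra_simps)
  hence "c * c - (real la - real mu) * c - (real k - real mu) = 0" using vi by simp
  moreover have e: "c * r1 + c * r2 = c * real la - c * real mu" using r12(2) by (metis distrib_left right_diff_distrib)
  ultimately have "c * c - (c * r1 + c * r2) + r1 * r2 = 0" using r12(3) by (simp add: algebra_simps)
  hence "(c - r1) * (c - r2) = 0" by (simp add: algebra_simps)
  thus ?thesis by simp
qed

lemma eigs_perp_eq: "eigs_perp G = {r1, r2}"
proof
  show "eigs_perp G \<subseteq> {r1, r2}"
  proof
    fix x assume "x \<in> eigs_perp G"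
    then obtain v :: "real^'v" where v: "v \<noteq> 0" "v \<bullet> vec 1 = 0" "Amul v = x *\<^sub>R v"
      unfolding eigs_perp_def Amul_def by blast
    show "x \<in> {r1, r2}" using eigenvalue_root[OF v(1) _ v(3)] v(2) inner_one by simp
  qed
  fix i :: 'v
  have "r1 \<in> eigs_perp G"
    unfolding eigs_perp_def using p1.proj_axis_nonzero[of i] p1.proj_in[of "axis i 1"]
    unfolding p1.eigsp_def Amul_def by blast
  moreover have "r2 \<in> eigs_perp G"
    unfolding eigs_perp_def using p2.proj_axis_nonzero[of i] p2.proj_in[of "axis i 1"]
    unfolding p2.eigsp_def Amul_def by blast
  ultimately show "{r1, r2} \<subseteq> eigs_perp G" by simp
qed

lemma eigval: "srg_eigval G 1 = r1" "srg_eigval G 2 = r2"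
  unfolding srg_eigval_def eigs_perp_eq using r12(1) by auto

lemma eigspace: "srg_eigspace G 1 = p1.eigsp" "srg_eigspace G 2 = p2.eigsp"
  unfolding srg_eigspace_def p1.eigsp_def p2.eigsp_def eigval Amul_def by auto

lemma dgs_embedding_eq: "dgs_embedding G 1 = p1.embed" "dgs_embedding G 2 = p2.embed"
  unfolding dgs_embedding_def[abs_def] eigspace
  by (simp_all add: p1.embed_normalized_projection p2.embed_normalized_projection)

text \<open>Comparing diagonal, adjacent and non-adjacent entries of G^2 = c G for a Gram matrix
  G = b J + be alpha + ga I (be \<noteq> 0) shows that -ga/be is one of the eigenvalues r1, r2.\<close>
lemma gram_square_eigen_condition:
  fixes z :: "'v \<Rightarrow> 'a::real_inner"
  assumes g: "\<And>i j. z i \<bullet> z j = b + be * \<alpha> i j + ga * of_bool (i = j)" and bne: "be \<noteq> 0"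
    and sq: "\<And>i j. (\<Sum>l\<in>UNIV. (z i \<bullet> z l) * (z l \<bullet> z j)) = c * (z i \<bullet> z j)"
  shows "(ga + be * r1) * (ga + be * r2) = 0"
proof -
  note ex = gram_square_counts[OF sym g[unfolded \<alpha>_def] sq, unfolded deg]
  obtain p q where pq: "G p q" "p \<noteq> q" by (rule adj_pair)
  obtain p' q' where pq': "\<not> G p' q'" "p' \<noteq> q'" by (rule nadj_pair)
  have D: "c * (b + ga) = b^2 * N + 2 * b * be * real k + 2 * b * ga + be^2 * real k + ga^2"
    using ex[of p p] irr[of p] deg[of p] unfolding N_def by (simp add: algebra_simps)
  have A: "c * (b + be) = b^2 * N + 2 * b * be * real k + 2 * b * ga + be^2 * real la + 2 * be * ga"
    using ex[of p q] pq la_count[of p q] unfolding N_def by (simp add: algebra_simps)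
  have M: "c * b = b^2 * N + 2 * b * be * real k + 2 * b * ga + be^2 * real mu"
    using ex[of p' q'] pq' mu_count[of p' q'] unfolding N_def by (simp add: algebra_simps)
  have h1: "be^2 * (real k - real mu) + ga^2 = c * ga" using D M by algebra
  have "be * (be * (real la - real mu) + 2 * ga - c) = 0" using A M by algebra
  hence "c = be * (real la - real mu) + 2 * ga" using bne by simp
  thus ?thesis using h1 r12(2) r12(3) by algebra
qed

lemma zero_sum_gram_dgs:
  fixes z :: "'v \<Rightarrow> 'a::real_inner" and a b c :: real
  assumes gz: "\<And>i j. z i \<bullet> z j = (if i = j then 1 else if G i j then a else b)"
    and ab: "a \<noteq> b"
    and sq: "\<And>i j. (\<Sum>l\<in>UNIV. (z i \<bullet> z l) * (z l \<bullet> z j)) = c * (z i \<bullet> z j)"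
    and s0: "\<And>i. (\<Sum>j\<in>UNIV. z i \<bullet> z j) = 0"
  shows "same_gram z (dgs_embedding G 1) \<or> same_gram z (dgs_embedding G 2)"
proof -
  have g: "z i \<bullet> z j = b + (a - b) * \<alpha> i j + (1 - b) * of_bool (i = j)" for i j
    using gz[of i j] irr[of i] unfolding \<alpha>_def by auto
  have gz1: "z i \<bullet> z i = 1" for i using gz by simp
  have roots: "(1 - b + (a - b) * r1) * (1 - b + (a - b) * r2) = 0"
    by (rule gram_square_eigen_condition[OF g _ sq]) (use ab in simp)
  have rowsum: "b * N + (a - b) * real k + (1 - b) = 0"
  proof -
    fix i
    have "0 = (\<Sum>j\<in>UNIV. b + (a - b) * \<alpha> i j + (1 - b) * of_bool (i = j))" using s0[of i] g by simp
    also have "\<dots> = b * N + (a - b) * real k + (1 - b)"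
      by (simp add: sum.distrib sum_distrib_left[symmetric] deg_sum N_def)
    finally show ?thesis by simp
  qed
  from roots consider "1 - b + (a - b) * r2 = 0" | "1 - b + (a - b) * r1 = 0" by auto
  thus ?thesis
  proof cases
    case 1
    then show ?thesis unfolding same_gram_def dgs_embedding_eq
      using p1.gram_eq_embed[OF g gz1 1 rowsum] by blast
  next
    case 2
    then show ?thesis unfolding same_gram_def dgs_embedding_eq
      using p2.gram_eq_embed[OF g gz1 2 rowsum] by blast
  qed
qed

end

lemma srg_nontrivial_srg:
  assumes "srg \<Gamma>" "\<not> complete_graph \<Gamma>" "\<not> empty_graph \<Gamma>"
  obtains k la mu where "nontrivial_srg \<Gamma> k la mu"
proof -
  obtain k la mu where
    "\<forall>u. card {w. \<Gamma> u w} = k"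
    "\<forall>u w. u \<noteq> w \<and> \<Gamma> u w \<longrightarrow> card {z. \<Gamma> u z \<and> \<Gamma> w z} = la"
    "\<forall>u w. u \<noteq> w \<and> \<not> \<Gamma> u w \<longrightarrow> card {z. \<Gamma> u z \<and> \<Gamma> w z} = mu"
    using assms(1) unfolding srg_def by blast
  moreover have "\<Gamma> u w \<longleftrightarrow> \<Gamma> w u" "\<not> \<Gamma> u u" for u w using assms(1) unfolding srg_def by blast+
  ultimately have "nontrivial_srg \<Gamma> k la mu" using assms(2,3) by unfold_locales blast+
  then show ?thesis by (rule that)
qed

lemma dgs_embedding_properties:
  fixes \<Gamma> :: "'v::finite \<Rightarrow> 'v \<Rightarrow> bool"
  assumes "srg \<Gamma>" "\<not> complete_graph \<Gamma>" "\<not> empty_graph \<Gamma>" and j: "j \<in> {1, 2}"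
  shows "spherical_2design_on (span (range (dgs_embedding \<Gamma> j))) (dgs_embedding \<Gamma> j) \<and>
    two_distance_tight_frame_on (span (range (dgs_embedding \<Gamma> j))) (dgs_embedding \<Gamma> j) \<and>
    lifting_property (dgs_embedding \<Gamma> j)"
proof -
  obtain k la mu where "nontrivial_srg \<Gamma> k la mu" using srg_nontrivial_srg assms by blast
  then interpret nontrivial_srg \<Gamma> k la mu .
  show ?thesis using j p1.embed_properties p2.embed_properties dgs_embedding_eq by auto
qed

text \<open>The regular simplex: the Gram matrix q J + p I with q = -1/(N-1), p = N/(N-1) satisfies
  G^2 = p G and has zero row sums, so the family is a zero-sum two-distance tight frame.\<close>
lemma simplex_properties:
  fixes T :: "'w::finite \<Rightarrow> 'b::euclidean_space"
  assumes N2: "CARD('w) \<ge> 2" and sg: "simplex_gram T"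
  shows "spherical_2design_on (span (range T)) T \<and> two_distance_tight_frame_on (span (range T)) T
     \<and> lifting_property T"
proof -
  define N where "N = real CARD('w)"
  define q where "q = - 1 / (N - 1)"
  define p where "p = N / (N - 1)"
  have N1: "N - 1 > 0" using N2 unfolding N_def by simp
  have qp1: "q + p = 1" unfolding q_def p_def add_divide_distrib[symmetric] using N1 by simp
  have g: "T i \<bullet> T j = q + p * of_bool (i = j)" for i j
    using sg qp1 unfolding simplex_gram_def q_def N_def by auto
  have qp: "N * q + p = 0" unfolding q_def p_def using N1 by (simp add: field_simps)
  have pp: "p > 0" unfolding p_def using N1 by (simp add: N_def)
  have sq: "\<forall>i j. (\<Sum>l\<in>UNIV. (T i \<bullet> T l) * (T l \<bullet> T j)) = p * (T i \<bullet> T j)"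
  proof (intro allI)
    fix i j
    have "(\<Sum>l\<in>UNIV. (T i \<bullet> T l) * (T l \<bullet> T j)) = (\<Sum>l\<in>UNIV.
        (q + 0 * 0 + p * of_bool (i = l)) * (q + 0 * 0 + p * of_bool (l = j)))"
      by (simp add: g)
    also have "\<dots> = q * (N * q + p) + p * q + p^2 * of_bool (i = j)"
      using gram_product_expansion[where al="\<lambda>_ _. 0" and b=q and be=0 and ga=p and i=i and j=j]
      by (simp add: N_def algebra_simps power2_eq_square)
    also have "\<dots> = p * (T i \<bullet> T j)" using qp by (simp add: g algebra_simps power2_eq_square)
    finally show "(\<Sum>l\<in>UNIV. (T i \<bullet> T l) * (T l \<bullet> T j)) = p * (T i \<bullet> T j)" .
  qed
  have un: "norm (T i) = 1" for i using sg unfolding simplex_gram_def by (simp add: norm_eq_1)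
  have tf: "tight_frame_on (span (range T)) T"
    unfolding tight_frame_on_def unit_in_def
    using un gram_square_imp_frame[OF sq] pp by (auto intro: span_base)
  have s0: "(\<Sum>i\<in>UNIV. T i) = 0"
  proof -
    have "(\<Sum>i\<in>UNIV. T i) \<bullet> (\<Sum>i\<in>UNIV. T i) = (\<Sum>i\<in>UNIV. \<Sum>j\<in>UNIV. q + p * of_bool (j = (i::'w)))"
      by (simp add: inner_sum_left inner_sum_right g)
    also have "\<dots> = N * (N * q + p)" by (simp add: sum.distrib N_def algebra_simps)
    finally show ?thesis using qp by simp
  qed
  have td: "two_distance T"
    unfolding two_distance_def using un sg unfolding simplex_gram_def by auto
  show ?thesis
    using zero_sum_tight_frame_design[OF subspace_span tf s0] tf td lifting[OF tf s0 td]
    unfolding two_distance_tight_frame_on_def by blast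
qed

lemma zero_sum_frame_design_type:
  fixes x :: "'v::finite \<Rightarrow> 'a::euclidean_space"
  assumes V: "subspace V" and tf: "tight_frame_on V x" and s0: "(\<Sum>i\<in>UNIV. x i) = 0"
    and gram: "\<And>i j. x i \<bullet> x j = (if i = j then 1 else if \<Gamma> i j then a else b)"
    and ab: "a \<noteq> b" and srg: "srg \<Gamma>"
  shows "design_type V x \<Gamma>"
  unfolding design_type_def
proof (intro conjI impI)
  show "spherical_2design_on V x" by (rule zero_sum_tight_frame_design[OF V tf s0])
  assume "\<not> complete_graph \<Gamma> \<and> \<not> empty_graph \<Gamma>"
  then obtain k la mu where "nontrivial_srg \<Gamma> k la mu" using srg_nontrivial_srg srg by blast
  then interpret nontrivial_srg \<Gamma> k la mu .
  obtain C where C: "\<forall>v\<in>V. (\<Sum>i\<in>UNIV. (v \<bullet> x i)^2) = C * (norm v)^2"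
    using tf unfolding tight_frame_on_def by blast
  have xV: "\<forall>i. x i \<in> V" using tf unfolding tight_frame_on_def unit_in_def by blast
  have "(\<Sum>j\<in>UNIV. x i \<bullet> x j) = 0" for i using s0 by (simp add: inner_sum_right[symmetric])
  then show "same_gram x (dgs_embedding \<Gamma> 1) \<or> same_gram x (dgs_embedding \<Gamma> 2) \<or> simplex_gram x"
    using zero_sum_gram_dgs[OF gram ab tight_frame_gram_square[OF V xV C]] by blast
qed

text \<open>If the Gram matrix satisfies G^2 = C G and has constant row sums rho, then
  rho^2 = C rho; when the sum s of the family is nonzero, rho = s . s / N \<noteq> 0, so rho = C.\<close>
lemma row_sum_eq_bound:
  fixes x :: "'v::finite \<Rightarrow> 'a::real_inner"
  assumes sq: "\<And>i j. (\<Sum>l\<in>UNIV. (x i \<bullet> x l) * (x l \<bullet> x j)) = C * (x i \<bullet> x j)"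
    and rows: "\<And>i. (\<Sum>j\<in>UNIV. x i \<bullet> x j) = \<rho>" and s: "(\<Sum>i\<in>UNIV. x i) \<noteq> 0"
  shows "\<rho> = C"
proof -
  fix i
  have "(\<Sum>i\<in>UNIV. x i) \<bullet> (\<Sum>j\<in>UNIV. x j) = (\<Sum>i\<in>UNIV. x i \<bullet> (\<Sum>j\<in>UNIV. x j))"
    by (rule inner_sum_left)
  also have "\<dots> = real CARD('v) * \<rho>" by (simp add: inner_sum_right rows)
  finally have "\<rho> \<noteq> 0" using s by auto
  have "\<rho> * \<rho> = (\<Sum>l\<in>UNIV. (x i \<bullet> x l) * \<rho>)" by (simp add: sum_distrib_right[symmetric] rows)
  also have "\<dots> = (\<Sum>j\<in>UNIV. \<Sum>l\<in>UNIV. (x i \<bullet> x l) * (x l \<bullet> x j))"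
    by (subst sum.swap) (simp add: sum_distrib_left[symmetric] rows)
  also have "\<dots> = C * \<rho>" by (simp add: sq sum_distrib_left[symmetric] rows)
  finally show ?thesis using \<open>\<rho> \<noteq> 0\<close> by simp
qed

text \<open>Distinct unit vectors have inner product < 1, so a row sum of the Gram matrix of an
  injective unit family with at least two members is < N.\<close>
lemma row_sum_lt_card:
  fixes x :: "'v::finite \<Rightarrow> 'a::real_inner"
  assumes N2: "CARD('v) \<ge> 2" and inj: "inj x" and un: "\<And>i. norm (x i) = 1"
  shows "(\<Sum>l\<in>UNIV. x i \<bullet> x l) < real CARD('v)"
proof -
  obtain j where ij: "j \<noteq> i"
  proof -
    have "\<not> UNIV \<subseteq> {i}" using N2 by (metis card_mono finite.intros card_1_singleton_iff
        card.empty card_insert_disjoint empty_iff finite_UNIV not_less_eq_eq numeral_2_eq_2)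
    thus ?thesis using that by blast
  qed
  have le1: "x i \<bullet> x l \<le> 1" for l using norm_cauchy_schwarz[of "x i" "x l"] un by simp
  have "x i \<bullet> x j \<noteq> 1"
  proof
    assume e: "x i \<bullet> x j = 1"
    have "(norm (x i - x j))^2 = 0" using un[of i] un[of j]
      unfolding power2_norm_eq_inner by (simp add: inner_diff_left inner_diff_right e inner_commute norm_eq_1)
    thus False using inj ij by (simp add: inj_eq)
  qed
  hence "x i \<bullet> x j < 1" using le1[of j] by simp
  hence "(\<Sum>l\<in>UNIV. x i \<bullet> x l) < (\<Sum>l\<in>(UNIV::'v set). 1)"
    using le1 by (intro sum_strict_mono_ex1) auto
  thus ?thesis by simp
qed

lemma shifted_frame:
  fixes x :: "'v::finite \<Rightarrow> 'a::euclidean_space"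
  defines "N \<equiv> real CARD('v)" and "n \<equiv> real DIM('a)" and "s \<equiv> \<Sum>i\<in>UNIV. x i"
  defines "y \<equiv> \<lambda>i. (1 / sqrt (1 - 1 / n)) *\<^sub>R (x i - (1 / N) *\<^sub>R s)"
  assumes un: "\<And>i. norm (x i) = 1" and fr: "\<forall>v. (\<Sum>i\<in>UNIV. (v \<bullet> x i)^2) = C * (norm v)^2"
    and xs: "\<And>i. x i \<bullet> s = C" and Cn: "C * n = N" and n1: "n > 1"
  shows "(norm s)^2 = N^2 / n" and "tight_frame_on {v. v \<bullet> s = 0} y" and "(\<Sum>i\<in>UNIV. y i) = 0"
    and "\<And>i j. y i \<bullet> y j = (x i \<bullet> x j - 1 / n) / (1 - 1 / n)"
proof -
  define \<sigma> where "\<sigma> = sqrt (1 - 1 / n)"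
  have s2: "\<sigma>^2 = 1 - 1 / n" and spos: "\<sigma> > 0" unfolding \<sigma>_def using n1 by simp_all
  have Npos: "N > 0" unfolding N_def by simp
  have CN: "C / N = 1 / n" using Cn n1 Npos by (simp add: field_simps)
  have "s \<bullet> s = (\<Sum>i\<in>UNIV. x i \<bullet> s)" unfolding s_def by (rule inner_sum_left)
  hence ss: "s \<bullet> s = N * C" by (simp add: xs N_def)
  show "(norm s)^2 = N^2 / n"
    unfolding power2_norm_eq_inner ss using Cn n1 by (simp add: field_simps power2_eq_square)
  have shift: "(x i - (1 / N) *\<^sub>R s) \<bullet> (x j - (1 / N) *\<^sub>R s) = x i \<bullet> x j - 1 / n" for i j
  proof -
    have "(x i - (1 / N) *\<^sub>R s) \<bullet> (x j - (1 / N) *\<^sub>R s) = x i \<bullet> x j - C / N - C / N + (s \<bullet> s) / N^2"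
      using xs[of i] xs[of j]
      by (simp add: inner_diff_left inner_diff_right inner_commute power2_eq_square algebra_simps)
    also have "(s \<bullet> s) / N^2 = C / N" unfolding ss using Npos by (simp add: power2_eq_square)
    finally show ?thesis unfolding CN by simp
  qed
  show yy: "y i \<bullet> y j = (x i \<bullet> x j - 1 / n) / (1 - 1 / n)" for i j
    unfolding y_def using shift[of i j] s2 \<sigma>_def by (simp add: power2_eq_square)
  have yun: "norm (y i) = 1" for i
    using yy[of i i] un[of i] n1 by (simp add: norm_eq_1)
  have ys: "y i \<bullet> s = 0" for i
    unfolding y_def using xs[of i] ss Npos by (simp add: inner_diff_left)
  have "(\<Sum>i\<in>UNIV. x i - (1 / N) *\<^sub>R s) = s - (N * (1 / N)) *\<^sub>R s"
    unfolding s_def N_def by (simp add: sum_subtractf sum_constant_scaleR)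
  then show "(\<Sum>i\<in>UNIV. y i) = 0"
    unfolding y_def using Npos by (simp add: scaleR_sum_right[symmetric])
  have yfr: "(\<Sum>i\<in>UNIV. (v \<bullet> y i)^2) = (C / \<sigma>^2) * (norm v)^2" if "v \<bullet> s = 0" for v
  proof -
    have "v \<bullet> y i = (v \<bullet> x i) / \<sigma>" for i unfolding y_def \<sigma>_def by (simp add: inner_diff_right that)
    hence "(\<Sum>i\<in>UNIV. (v \<bullet> y i)^2) = (\<Sum>i\<in>UNIV. (v \<bullet> x i)^2) / \<sigma>^2"
      by (simp add: power_divide sum_divide_distrib)
    thus ?thesis using fr by simp
  qed
  have "C = N / n" using Cn n1 by (simp add: eq_divide_eq)
  hence "C > 0" using Npos n1 by simp
  then show "tight_frame_on {v. v \<bullet> s = 0} y"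
    unfolding tight_frame_on_def unit_in_def
    using yun ys yfr spos by (intro conjI exI[of _ "C / \<sigma>^2"]) auto
qed

text \<open>Case (ii) for a two-distance frame: a nonzero sum forces the row sums to equal
  C = N/n (so n > 1, as the row sums are < N), and the shifted family y is a two-distance
  zero-sum tight frame of s-perp, hence a design of DGS type there.\<close>
lemma nonzero_sum_shifted_design:
  fixes x :: "'v::finite \<Rightarrow> 'a::euclidean_space"
  defines "N \<equiv> real CARD('v)" and "n \<equiv> real DIM('a)" and "s \<equiv> \<Sum>i\<in>UNIV. x i"
  defines "y \<equiv> \<lambda>i. (1 / sqrt (1 - 1 / n)) *\<^sub>R (x i - (1 / N) *\<^sub>R s)"
  assumes N2: "CARD('v) \<ge> 2" and inj: "inj x" and un: "\<And>i. norm (x i) = 1"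
    and fr: "\<forall>v. (\<Sum>i\<in>UNIV. (v \<bullet> x i)^2) = C * (norm v)^2" and Cn: "C * n = N"
    and gz: "\<And>i j. x i \<bullet> x j = (if i = j then 1 else if \<Gamma> i j then a else b)"
    and ab: "a \<noteq> b" and srg: "srg \<Gamma>" and s: "s \<noteq> 0"
  shows "(norm s)^2 = N^2 / n \<and> two_distance y \<and> design_type {v. v \<bullet> s = 0} y \<Gamma>"
proof -
  have sq: "(\<Sum>l\<in>UNIV. (x i \<bullet> x l) * (x l \<bullet> x j)) = C * (x i \<bullet> x j)" for i j
    using tight_frame_gram_square[OF subspace_UNIV _ fr[unfolded ball_UNIV[symmetric]]] by simp
  obtain k where deg: "\<And>u. card {w. \<Gamma> u w} = k" and irr: "\<And>u. \<not> \<Gamma> u u"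
    using srg unfolding srg_def by blast
  have "(\<Sum>j\<in>UNIV. x i \<bullet> x j) = b * N + (a - b) * real k + (1 - b)" for i
  proof -
    have "x i \<bullet> x j = b + (a - b) * of_bool (\<Gamma> i j) + (1 - b) * of_bool (i = j)" for j
      using gz[of i j] irr[of i] by auto
    thus ?thesis using deg[of i] by (simp add: sum.distrib sum_distrib_left[symmetric] N_def)
  qed
  hence rows: "(\<Sum>j\<in>UNIV. x i \<bullet> x j) = C" for i using row_sum_eq_bound[OF sq] s s_def by metis
  have xs: "x i \<bullet> s = C" for i using rows[of i] unfolding s_def by (simp add: inner_sum_right)
  have n1: "n > 1"
  proof (rule ccontr)
    assume "\<not> n > 1"
    moreover have "n \<ge> 1" unfolding n_def using DIM_positive[where 'a='a] by linarith
    ultimately have "C = N" using Cn by simp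
    thus False using row_sum_lt_card[OF N2 inj un] rows unfolding N_def by (metis less_irrefl)
  qed
  note sh = shifted_frame[OF un fr xs[unfolded s_def] Cn[unfolded n_def N_def] n1[unfolded n_def],
      folded N_def n_def s_def, folded y_def]
  define a' b' where "a' = (a - 1 / n) / (1 - 1 / n)" and "b' = (b - 1 / n) / (1 - 1 / n)"
  have a'b': "a' \<noteq> b'" using ab n1 unfolding a'_def b'_def by (simp add: divide_cancel_right)
  have yy: "y i \<bullet> y j = (x i \<bullet> x j - 1 / n) / (1 - 1 / n)" for i j
    using sh(4) unfolding y_def by blast
  have gy: "y i \<bullet> y j = (if i = j then 1 else if \<Gamma> i j then a' else b')" for i j
    using yy[of i j] gz[of i j] n1 unfolding a'_def b'_def by auto
  have "two_distance y"
    unfolding two_distance_def using gy by (auto simp: norm_eq_sqrt_inner)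
  moreover have "design_type {v. v \<bullet> s = 0} y \<Gamma>"
    by (rule zero_sum_frame_design_type[OF subspace_hyperplane2 sh(2) sh(3) gy a'b' srg])
  ultimately show ?thesis using sh(1) by blast
qed

lemma two_distance_tight_frame_classification:
  fixes x :: "'v::finite \<Rightarrow> 'a::euclidean_space" and a b :: real
  assumes N2: "CARD('v) \<ge> 2" and inj: "inj x" and tf: "tight_frame_on UNIV x"
    and two: "\<forall>i j. i \<noteq> j \<longrightarrow> x i \<bullet> x j = a \<or> x i \<bullet> x j = b" and ab: "a \<noteq> b" "a \<noteq> - b"
  shows "let \<Gamma>1 = (\<lambda>i j. i \<noteq> j \<and> x i \<bullet> x j = a); s = (\<Sum>i\<in>UNIV. x i);
           N = real CARD('v); n = real DIM('a) in
        srg \<Gamma>1 \<and>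
        (s = 0 \<longrightarrow> design_type UNIV x \<Gamma>1) \<and>
        (s \<noteq> 0 \<longrightarrow>
           (norm s)^2 = N^2 / n \<and>
           (let y = (\<lambda>i. (1 / sqrt (1 - 1 / n)) *\<^sub>R (x i - (1 / N) *\<^sub>R s)) in
              two_distance y \<and> design_type {v. v \<bullet> s = 0} y \<Gamma>1))"
proof -
  define \<Gamma> where "\<Gamma> = (\<lambda>i j. i \<noteq> j \<and> x i \<bullet> x j = a)"
  obtain C where C: "\<forall>v\<in>UNIV. (\<Sum>i\<in>UNIV. (v \<bullet> x i)^2) = C * (norm v)^2"
    using tf unfolding tight_frame_on_def by blast
  have uU: "unit_in UNIV x" using tf unfolding tight_frame_on_def by blast
  hence un: "norm (x i) = 1" for i unfolding unit_in_def by blast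
  have Cn: "C * real DIM('a) = real CARD('v)"
    using tight_frame_bound_dim[OF subspace_UNIV uU C] by simp
  have srg: "srg \<Gamma>" unfolding \<Gamma>_def
    using two_distance_gram_srg[OF un tight_frame_gram_square[OF subspace_UNIV _ C] _ ab] two by blast
  have gz: "x i \<bullet> x j = (if i = j then 1 else if \<Gamma> i j then a else b)" for i j
    using two un[of i] unfolding \<Gamma>_def by (auto simp: norm_eq_1)
  show ?thesis
    unfolding Let_def \<Gamma>_def[symmetric]
    using srg zero_sum_frame_design_type[OF subspace_UNIV tf _ gz ab(1) srg]
      nonzero_sum_shifted_design[OF N2 inj un C[unfolded ball_UNIV] Cn gz ab(1) srg]
    by simp
qed

theorem mainTheorem1:
  shows
  "(\<forall>(x :: 'v::finite \<Rightarrow> 'a::euclidean_space) (a::real) b.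
      CARD('v) \<ge> 2 \<and> inj x \<and> tight_frame_on UNIV x \<and>
      (\<forall>i j. i \<noteq> j \<longrightarrow> x i \<bullet> x j = a \<or> x i \<bullet> x j = b) \<and> a \<noteq> b \<and> a \<noteq> - b
      \<longrightarrow>
      (let \<Gamma>1 = (\<lambda>i j. i \<noteq> j \<and> x i \<bullet> x j = a); s = (\<Sum>i\<in>UNIV. x i);
           N = real CARD('v); n = real DIM('a) in
        srg \<Gamma>1 \<and>
        (s = 0 \<longrightarrow> design_type UNIV x \<Gamma>1) \<and>
        (s \<noteq> 0 \<longrightarrow>
           (norm s)^2 = N^2 / n \<and>
           (let y = (\<lambda>i. (1 / sqrt (1 - 1 / n)) *\<^sub>R (x i - (1 / N) *\<^sub>R s)) in
              two_distance y \<and> design_type {v. v \<bullet> s = 0} y \<Gamma>1))))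
   \<and>
   (\<forall>\<Gamma>1 :: 'w::finite \<Rightarrow> 'w \<Rightarrow> bool.
      srg \<Gamma>1 \<and> \<not> complete_graph \<Gamma>1 \<and> \<not> empty_graph \<Gamma>1 \<longrightarrow>
      (\<forall>j\<in>{1, 2}. let T = dgs_embedding \<Gamma>1 j; V = span (range T) in
          spherical_2design_on V T \<and> two_distance_tight_frame_on V T \<and> lifting_property T) \<and>
      (\<forall>T :: 'w \<Rightarrow> 'b::euclidean_space. simplex_gram T \<longrightarrow>
          (let V = span (range T) in
           spherical_2design_on V T \<and> two_distance_tight_frame_on V T \<and> lifting_property T)))"
proof (intro conjI allI impI ballI)
  fix x :: "'v \<Rightarrow> 'a" and a b :: real
  assume "CARD('v) \<ge> 2 \<and> inj x \<and> tight_frame_on UNIV x \<and>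
      (\<forall>i j. i \<noteq> j \<longrightarrow> x i \<bullet> x j = a \<or> x i \<bullet> x j = b) \<and> a \<noteq> b \<and> a \<noteq> - b"
  then show "let \<Gamma>1 = (\<lambda>i j. i \<noteq> j \<and> x i \<bullet> x j = a); s = (\<Sum>i\<in>UNIV. x i);
           N = real CARD('v); n = real DIM('a) in
        srg \<Gamma>1 \<and> (s = 0 \<longrightarrow> design_type UNIV x \<Gamma>1) \<and>
        (s \<noteq> 0 \<longrightarrow> (norm s)^2 = N^2 / n \<and>
           (let y = (\<lambda>i. (1 / sqrt (1 - 1 / n)) *\<^sub>R (x i - (1 / N) *\<^sub>R s)) in
              two_distance y \<and> design_type {v. v \<bullet> s = 0} y \<Gamma>1))"
    using two_distance_tight_frame_classification by blast
next
  fix \<Gamma>1 :: "'w \<Rightarrow> 'w \<Rightarrow> bool" and j :: nat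
  assume "srg \<Gamma>1 \<and> \<not> complete_graph \<Gamma>1 \<and> \<not> empty_graph \<Gamma>1" and "j \<in> {1, 2}"
  then show "let T = dgs_embedding \<Gamma>1 j; V = span (range T) in
      spherical_2design_on V T \<and> two_distance_tight_frame_on V T \<and> lifting_property T"
    using dgs_embedding_properties unfolding Let_def by blast
next
  fix \<Gamma>1 :: "'w \<Rightarrow> 'w \<Rightarrow> bool" and T :: "'w \<Rightarrow> 'b"
  assume "srg \<Gamma>1 \<and> \<not> complete_graph \<Gamma>1 \<and> \<not> empty_graph \<Gamma>1" and "simplex_gram T"
  moreover obtain p q :: 'w where "p \<noteq> q"
    using \<open>srg \<Gamma>1 \<and> \<not> complete_graph \<Gamma>1 \<and> \<not> empty_graph \<Gamma>1\<close> unfolding complete_graph_def by blast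
  then have "CARD('w) \<ge> 2" using card_mono[of UNIV "{p, q}"] by simp
  ultimately show "let V = span (range T) in
      spherical_2design_on V T \<and> two_distance_tight_frame_on V T \<and> lifting_property T"
    using simplex_properties unfolding Let_def by blast
qed

end
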